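(* Let $A$ and $B$ be self-adjoint operators on the same complex Hilbert space, with $B$ bounded and non-negative. Then the following are equivalent: (i) $0 \in \rho(A+tB)$ for every $t\in\mathbb{R}$; (ii) $0\in\rho(A)$ and $BA^{-1}B=0$. Moreover, in this case $0\in\rho(A+zB)$ for all $z \in \mathbb{C}$, and $$(A+zB)^{-1} = A^{-1} - zA^{-1}BA^{-1}.$$
   Context: $\rho(T)$ denotes the resolvent set of an operator $T$. $A$ may be unbounded; $A+zB$ is defined on the domain of $A$. *)

theory Defs
  imports "HOL-Analysis.Analysis"
begin

class complex_vector = real_vector +
  fixes scaleC :: "complex \<Rightarrow> 'a \<Rightarrow> 'a" (infixr \<open>*\<^sub>C\<close> 75)
  assumes scaleC_add_right: "a *\<^sub>C (x + y) = a *\<^sub>C x + a *\<^sub>C y"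
    and scaleC_add_left: "(a + b) *\<^sub>C x = a *\<^sub>C x + b *\<^sub>C x"
    and scaleC_scaleC: "a *\<^sub>C (b *\<^sub>C x) = (a * b) *\<^sub>C x"
    and scaleC_one: "1 *\<^sub>C x = x"
    and scaleR_scaleC: "scaleR r x = complex_of_real r *\<^sub>C x"

class complex_inner = complex_vector + real_normed_vector +
  fixes cinner :: "'a \<Rightarrow> 'a \<Rightarrow> complex"
  assumes cinner_commute: "cinner x y = cnj (cinner y x)"
    and cinner_add_left: "cinner (x + y) z = cinner x z + cinner y z"
    and cinner_scaleC_left: "cinner (r *\<^sub>C x) y = cnj r * cinner x y"
    and cinner_ge_zero: "Im (cinner x x) = 0 \<and> 0 \<le> Re (cinner x x)"
    and cinner_eq_zero_iff: "cinner x x = 0 \<longleftrightarrow> x = 0"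
    and norm_eq_sqrt_cinner: "norm x = sqrt (Re (cinner x x))"

class chilbert_space = complex_inner + complete_space

text \<open>A (possibly unbounded) linear operator is given by its domain D and its action T on D.\<close>
definition clinear_on :: "'a::complex_vector set \<Rightarrow> ('a \<Rightarrow> 'a) \<Rightarrow> bool" where
  "clinear_on D T \<longleftrightarrow> 0 \<in> D \<and>
     (\<forall>x\<in>D. \<forall>y\<in>D. \<forall>c. c *\<^sub>C x + y \<in> D \<and> T (c *\<^sub>C x + y) = c *\<^sub>C T x + T y)"

text \<open>Self-adjoint: densely defined, linear, and T = T* (including equality of domains):
  y \<in> dom(T*) with T* y = z iff \<langle>T x, y\<rangle> = \<langle>x, z\<rangle> for all x \<in> D.\<close>
definition self_adjoint_op :: "'a::chilbert_space set \<Rightarrow> ('a \<Rightarrow> 'a) \<Rightarrow> bool" where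
  "self_adjoint_op D T \<longleftrightarrow> clinear_on D T \<and> closure D = UNIV \<and>
     (\<forall>x\<in>D. \<forall>y\<in>D. cinner (T x) y = cinner x (T y)) \<and>
     (\<forall>y z. (\<forall>x\<in>D. cinner (T x) y = cinner x z) \<longrightarrow> y \<in> D \<and> T y = z)"

definition bounded_cop :: "('a::chilbert_space \<Rightarrow> 'a) \<Rightarrow> bool" where
  "bounded_cop T \<longleftrightarrow> clinear_on UNIV T \<and> (\<exists>C. \<forall>x. norm (T x) \<le> C * norm x)"

definition nonneg_op :: "('a::chilbert_space \<Rightarrow> 'a) \<Rightarrow> bool" where
  "nonneg_op T \<longleftrightarrow> (\<forall>x. 0 \<le> Re (cinner (T x) x))"

definition resolvent_set :: "'a::chilbert_space set \<Rightarrow> ('a \<Rightarrow> 'a) \<Rightarrow> complex set" where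
  "resolvent_set D T = {\<mu>. bij_betw (\<lambda>x. T x - \<mu> *\<^sub>C x) D UNIV \<and>
      (\<exists>C. \<forall>y. norm (inv_into D (\<lambda>x. T x - \<mu> *\<^sub>C x) y) \<le> C * norm y)}"

end

theory Submission
  imports Defs
begin

text \<open>
  Write \<open>K = A\<inverse>\<close>. If \<open>0 \<in> \<rho>(A)\<close> and \<open>B K B = 0\<close>, a direct computation shows that
  \<open>K - z K B K\<close> is a bounded two-sided inverse of \<open>A + z B\<close>.

  Conversely, suppose \<open>A + t B\<close> is boundedly invertible for all real \<open>t\<close>. Then \<open>K\<close> is bounded and
  hermitian, so \<open>q x = \<langle>K B x, B x\<rangle>\<close> is real and \<open>|q x| \<le> C \<langle>B x, x\<rangle>\<close>. If \<open>q\<close> took a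
  positive value (the negative case is symmetric), let \<open>\<lambda> > 0\<close> be the supremum of \<open>q\<close> on
  \<open>\<langle>B x, x\<rangle> = 1\<close>. Then \<open>P = \<lambda> B - B K B \<ge> 0\<close>, hence \<open>\<parallel>P x\<parallel>\<^sup>2 \<le> C (\<lambda> - q x)\<close> there, which tends
  to 0 along maximising \<open>x\<close>. But \<open>(A - B / \<lambda>) K B x = P x / \<lambda>\<close>, so the bounded inverse of
  \<open>A - B / \<lambda>\<close> gives \<open>q x \<le> C' \<parallel>P x\<parallel>\<close>, contradicting \<open>q x \<rightarrow> \<lambda>\<close>. Thus \<open>q = 0\<close>, and
  \<open>B K B = 0\<close> by polarization.
\<close>

lemma scaleC_zero_left [simp]: "(0::complex) *\<^sub>C (x::'a::complex_vector) = 0"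
proof -
  have "(0::complex) *\<^sub>C x = 0 *\<^sub>C x + 0 *\<^sub>C x" by (metis add_0 scaleC_add_left)
  then show ?thesis by simp
qed

lemma scaleC_zero_right [simp]: "a *\<^sub>C (0::'a::complex_vector) = 0"
proof -
  have "a *\<^sub>C (0::'a) = a *\<^sub>C 0 + a *\<^sub>C 0" by (metis add_0 scaleC_add_right)
  then show ?thesis by simp
qed

lemma scaleC_minus_left: "(- a) *\<^sub>C (x::'a::complex_vector) = - (a *\<^sub>C x)"
  by (metis eq_neg_iff_add_eq_0 scaleC_add_left scaleC_zero_left)

lemma scaleC_minus_right: "a *\<^sub>C (- x::'a::complex_vector) = - (a *\<^sub>C x)"
  by (metis eq_neg_iff_add_eq_0 scaleC_add_right scaleC_zero_right)

lemma scaleC_diff_right: "a *\<^sub>C (x - y::'a::complex_vector) = a *\<^sub>C x - a *\<^sub>C y"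
  by (metis diff_conv_add_uminus scaleC_add_right scaleC_minus_right)

lemma cinner_add_right: "cinner (x::'a::complex_inner) (y + z) = cinner x y + cinner x z"
  by (metis cinner_add_left cinner_commute complex_cnj_add)

lemma cinner_scaleC_right: "cinner (x::'a::complex_inner) (r *\<^sub>C y) = r * cinner x y"
  by (metis cinner_commute cinner_scaleC_left complex_cnj_cnj complex_cnj_mult)

lemma cinner_zero_left [simp]: "cinner 0 (x::'a::complex_inner) = 0"
  using cinner_scaleC_left[of 0 x x] by simp

lemma cinner_diff_left: "cinner (x - y::'a::complex_inner) z = cinner x z - cinner y z"
  by (metis add_diff_cancel cinner_add_left diff_add_cancel)

lemma cinner_diff_right: "cinner (x::'a::complex_inner) (y - z) = cinner x y - cinner x z"
  by (metis add_diff_cancel cinner_add_right diff_add_cancel)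

lemma cinner_scaleR_left: "cinner (r *\<^sub>R x::'a::complex_inner) y = complex_of_real r * cinner x y"
  by (simp add: scaleR_scaleC cinner_scaleC_left)

lemma cinner_scaleR_right: "cinner (x::'a::complex_inner) (r *\<^sub>R y) = complex_of_real r * cinner x y"
  by (simp add: scaleR_scaleC cinner_scaleC_right)

lemma cinner_self: "cinner (x::'a::complex_inner) x = complex_of_real ((norm x)\<^sup>2)"
  using cinner_ge_zero[of x] norm_eq_sqrt_cinner[of x] by (simp add: complex_eq_iff)

lemma norm_scaleC: "norm (c *\<^sub>C (x::'a::complex_inner)) = cmod c * norm x"
proof -
  have "complex_of_real ((norm (c *\<^sub>C x))\<^sup>2) = cnj c * c * complex_of_real ((norm x)\<^sup>2)"
    by (simp only: cinner_self[symmetric] cinner_scaleC_left cinner_scaleC_right mult_ac)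
  also have "\<dots> = complex_of_real ((cmod c * norm x)\<^sup>2)"
    using complex_norm_square[of c] by (simp add: power_mult_distrib mult.commute)
  finally have "(norm (c *\<^sub>C x))\<^sup>2 = (cmod c * norm x)\<^sup>2"
    using of_real_eq_iff by blast
  then show ?thesis by simp
qed

lemma clinear_onD:
  "clinear_on D T \<Longrightarrow> x \<in> D \<Longrightarrow> y \<in> D \<Longrightarrow> c *\<^sub>C x + y \<in> D \<and> T (c *\<^sub>C x + y) = c *\<^sub>C T x + T y"
  unfolding clinear_on_def by blast

lemma clinear_on_UNIV_iff:
  "clinear_on UNIV T \<longleftrightarrow> (\<forall>c x y. T (c *\<^sub>C x + y) = c *\<^sub>C T x + T y)"
  unfolding clinear_on_def by blast

lemma clinear_on_zero:
  assumes "clinear_on D T" shows "0 \<in> D" "T 0 = 0"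
proof -
  show D0: "0 \<in> D" using assms unfolding clinear_on_def by blast
  show "T 0 = 0" using clinear_onD[OF assms D0 D0, of 1] by (simp add: scaleC_one)
qed

lemma clinear_on_add:
  assumes "clinear_on D T" "x \<in> D" "y \<in> D" shows "x + y \<in> D" "T (x + y) = T x + T y"
  using clinear_onD[OF assms, of 1] by (auto simp: scaleC_one)

lemma clinear_on_scaleC:
  assumes "clinear_on D T" "x \<in> D" shows "c *\<^sub>C x \<in> D" "T (c *\<^sub>C x) = c *\<^sub>C T x"
  using clinear_onD[OF assms clinear_on_zero(1)[OF assms(1)], of c] clinear_on_zero(2)[OF assms(1)]
  by auto

lemma clinear_on_minus:
  assumes "clinear_on D T" "x \<in> D" shows "- x \<in> D" "T (- x) = - T x"
  using clinear_on_scaleC[OF assms, of "-1"] by (auto simp: scaleC_minus_left scaleC_one)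

lemma clinear_on_diff:
  assumes "clinear_on D T" "x \<in> D" "y \<in> D" shows "x - y \<in> D" "T (x - y) = T x - T y"
  using clinear_on_add[OF assms(1,2) clinear_on_minus(1)[OF assms(1,3)]]
    clinear_on_minus(2)[OF assms(1,3)]
  by auto

lemma clinear_on_UNIV_scaleR: "clinear_on UNIV T \<Longrightarrow> T (r *\<^sub>R x) = r *\<^sub>R T x"
  by (simp add: scaleR_scaleC clinear_on_scaleC)

lemma clinear_on_UNIV_comp:
  "clinear_on UNIV S \<Longrightarrow> clinear_on UNIV T \<Longrightarrow> clinear_on UNIV (\<lambda>x. S (T x))"
  by (simp add: clinear_on_UNIV_iff)

lemma clinear_on_UNIV_scaleC:
  "clinear_on UNIV T \<Longrightarrow> clinear_on UNIV (\<lambda>x. a *\<^sub>C T x)"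
  by (simp add: clinear_on_UNIV_iff scaleC_add_right scaleC_scaleC mult.commute)

lemma clinear_on_UNIV_diff:
  "clinear_on UNIV S \<Longrightarrow> clinear_on UNIV T \<Longrightarrow> clinear_on UNIV (\<lambda>x. S x - (T x :: 'a::complex_vector))"
  by (simp add: clinear_on_UNIV_iff scaleC_diff_right)

lemma bij_betw_UNIV_inv_into:
  assumes "bij_betw A D UNIV" shows "inv_into D A y \<in> D" "A (inv_into D A y) = y"
  using assms by (auto simp: bij_betw_def intro: inv_into_into f_inv_into_f)

lemma clinear_on_inv_into:
  assumes lin: "clinear_on D A" and bij: "bij_betw A D UNIV"
  shows "clinear_on UNIV (inv_into D A)"
  unfolding clinear_on_UNIV_iff
proof (intro allI)
  fix c x y
  let ?v = "c *\<^sub>C inv_into D A x + inv_into D A y"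
  have "?v \<in> D" and "A ?v = c *\<^sub>C x + y"
    using clinear_onD[OF lin bij_betw_UNIV_inv_into(1)[OF bij] bij_betw_UNIV_inv_into(1)[OF bij]]
      bij_betw_UNIV_inv_into(2)[OF bij] by auto
  then show "inv_into D A (c *\<^sub>C x + y) = ?v"
    using bij_betw_inv_into_left[OF bij] by metis
qed

lemma zero_in_resolvent_set_iff:
  "0 \<in> resolvent_set D T \<longleftrightarrow> bij_betw T D UNIV \<and> (\<exists>C. \<forall>y. norm (inv_into D T y) \<le> C * norm y)"
  by (simp add: resolvent_set_def)

lemma nonneg_bound:
  fixes g :: "'a \<Rightarrow> 'b::real_normed_vector"
  assumes "\<And>y. norm (f y) \<le> C * norm (g y)"
  obtains C' where "0 \<le> C'" "\<And>y. norm (f y) \<le> C' * norm (g y)"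
proof
  show "norm (f y) \<le> max C 0 * norm (g y)" for y
    using assms[of y] by (meson max.cobounded1 mult_right_mono norm_ge_zero order_trans)
qed simp

lemma zero_in_resolvent_setE:
  assumes "0 \<in> resolvent_set D T"
  obtains C where "bij_betw T D UNIV" "0 \<le> C" "\<And>y. norm (inv_into D T y) \<le> C * norm y"
proof -
  obtain C0 where bij: "bij_betw T D UNIV" and bound0: "\<And>y. norm (inv_into D T y) \<le> C0 * norm y"
    using assms unfolding zero_in_resolvent_set_iff by blast
  from bound0 obtain C where "0 \<le> C" "\<And>y. norm (inv_into D T y) \<le> C * norm y"
    by (rule nonneg_bound[of "inv_into D T"]) blast
  with bij show thesis by (rule that)
qed

lemma bounded_copE:
  assumes "bounded_cop B"
  obtains C where "clinear_on UNIV B" "0 \<le> C" "\<And>x. norm (B x) \<le> C * norm x"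
proof -
  obtain C0 where lin: "clinear_on UNIV B" and bound0: "\<And>x. norm (B x) \<le> C0 * norm x"
    using assms unfolding bounded_cop_def by blast
  from bound0 obtain C where "0 \<le> C" "\<And>x. norm (B x) \<le> C * norm x"
    by (rule nonneg_bound[of B]) blast
  with lin show thesis by (rule that)
qed

section \<open>Hermitian operators\<close>

definition hermitian_op :: "('a::complex_inner \<Rightarrow> 'a) \<Rightarrow> bool" where
  "hermitian_op T \<longleftrightarrow> (\<forall>x y. cinner (T x) y = cinner x (T y))"

lemma hermitian_opD: "hermitian_op T \<Longrightarrow> cinner (T x) y = cinner x (T y)"
  unfolding hermitian_op_def by blast

lemma hermitian_op_sandwich:
  assumes "hermitian_op B" "hermitian_op K"
  shows "hermitian_op (\<lambda>x. B (K (B x)))"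
  using assms by (simp add: hermitian_op_def)

lemma hermitian_op_inv_into:
  assumes sym: "\<forall>x\<in>D. \<forall>y\<in>D. cinner (A x) y = cinner x (A y)" and bij: "bij_betw A D UNIV"
  shows "hermitian_op (inv_into D A)"
  unfolding hermitian_op_def
proof (intro allI)
  fix x y
  have "cinner (inv_into D A x) y = cinner (inv_into D A x) (A (inv_into D A y))"
    by (simp add: bij_betw_UNIV_inv_into(2)[OF bij])
  also have "\<dots> = cinner (A (inv_into D A x)) (inv_into D A y)"
    using sym bij_betw_UNIV_inv_into(1)[OF bij] by simp
  also have "\<dots> = cinner x (inv_into D A y)"
    by (simp add: bij_betw_UNIV_inv_into(2)[OF bij])
  finally show "cinner (inv_into D A x) y = cinner x (inv_into D A y)" .
qed

lemma le_mult_if_quadratic_nonneg: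
  fixes a b c :: real
  assumes nonneg: "\<And>t. 0 \<le> a - 2 * t * b + t\<^sup>2 * b * c" and "0 \<le> c"
  shows "b \<le> a * c"
proof (cases "c = 0")
  case True
  show ?thesis
  proof (rule ccontr)
    assume "\<not> b \<le> a * c"
    with True have "b > 0" by simp
    have "0 \<le> a - 2 * ((a + 1) / (2 * b)) * b" using nonneg[of "(a + 1) / (2 * b)"] True by simp
    also have "\<dots> = -1" using \<open>b > 0\<close> by (simp add: field_simps)
    finally show False by simp
  qed
next
  case False
  with \<open>0 \<le> c\<close> have "c > 0" by simp
  have "0 \<le> a - 2 * (1 / c) * b + (1 / c)\<^sup>2 * b * c" by (rule nonneg)
  also have "\<dots> = a - b / c" using \<open>c > 0\<close> by (simp add: power2_eq_square field_simps)
  finally show ?thesis using \<open>c > 0\<close> by (simp add: field_simps)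
qed

lemma nonneg_hermitian_cauchy_schwarz:
  fixes T :: "'a::complex_inner \<Rightarrow> 'a"
  assumes lin: "clinear_on UNIV T" and herm: "hermitian_op T"
    and nonneg: "\<And>x. 0 \<le> Re (cinner (T x) x)"
  shows "(cmod (cinner (T x) y))\<^sup>2 \<le> Re (cinner (T x) x) * Re (cinner (T y) y)"
proof -
  define w where "w = cinner (T y) x"
  define a where "a = Re (cinner (T x) x)"
  define c where "c = Re (cinner (T y) y)"
  define b where "b = (cmod w)\<^sup>2"
  have wxy: "cinner (T x) y = cnj w"
    unfolding w_def by (metis herm hermitian_opD cinner_commute)
  have bw: "complex_of_real b = w * cnj w" unfolding b_def by (rule complex_norm_square)
  \<comment> \<open>nonnegativity of the form at \<open>x - t w y\<close> for real \<open>t\<close>\<close>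
  have quadratic_nonneg: "0 \<le> a - 2 * t * b + t\<^sup>2 * b * c" for t :: real
  proof -
    define s where "s = complex_of_real t * w"
    define v where "v = x - s *\<^sub>C y"
    have Tv: "T v = T x - s *\<^sub>C T y"
      unfolding v_def using clinear_on_diff[OF lin, of x "s *\<^sub>C y"] clinear_on_scaleC[OF lin, of y s]
      by simp
    have "cinner (T v) v = cinner (T x) x - s * cinner (T x) y - cnj s * cinner (T y) x
        + cnj s * s * cinner (T y) y"
      unfolding Tv
      by (simp add: v_def cinner_diff_left cinner_diff_right cinner_scaleC_left
          cinner_scaleC_right algebra_simps)
    also have "\<dots> = cinner (T x) x - complex_of_real (2 * t * b) + complex_of_real (t\<^sup>2 * b) * cinner (T y) y"
      unfolding wxy s_def w_def[symmetric] by (simp add: bw algebra_simps power2_eq_square)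
    finally have "Re (cinner (T v) v) = a - 2 * t * b + t\<^sup>2 * b * c"
      by (simp add: a_def c_def)
    then show ?thesis using nonneg[of v] by simp
  qed
  have "c \<ge> 0" using nonneg by (simp add: c_def)
  with quadratic_nonneg have "b \<le> a * c" by (rule le_mult_if_quadratic_nonneg)
  then show ?thesis unfolding wxy a_def c_def b_def by simp
qed

lemma norm_cinner_le: "cmod (cinner x y) \<le> norm x * norm (y::'a::complex_inner)"
proof -
  have "(cmod (cinner (id x) y))\<^sup>2 \<le> Re (cinner (id x) x) * Re (cinner (id y) y)"
    by (rule nonneg_hermitian_cauchy_schwarz) (auto simp: clinear_on_def hermitian_op_def cinner_self)
  then have "(cmod (cinner x y))\<^sup>2 \<le> (norm x * norm y)\<^sup>2"
    by (simp add: cinner_self power_mult_distrib)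
  then show ?thesis by (rule power2_le_imp_le) simp
qed

lemma norm_sq_le_nonneg_hermitian:
  fixes T :: "'a::complex_inner \<Rightarrow> 'a"
  assumes lin: "clinear_on UNIV T" and herm: "hermitian_op T"
    and nonneg: "\<And>x. 0 \<le> Re (cinner (T x) x)" and bound: "\<And>x. norm (T x) \<le> C * norm x"
  shows "(norm (T x))\<^sup>2 \<le> C * Re (cinner (T x) x)"
proof (cases "T x = 0")
  case False
  define u where "u = T x"
  have "((norm u)\<^sup>2)\<^sup>2 = (cmod (cinner (T x) u))\<^sup>2"
    unfolding u_def cinner_self norm_of_real by simp
  also have "\<dots> \<le> Re (cinner (T x) x) * Re (cinner (T u) u)"
    by (rule nonneg_hermitian_cauchy_schwarz[OF lin herm nonneg])
  also have "\<dots> \<le> Re (cinner (T x) x) * (C * (norm u)\<^sup>2)"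
  proof (rule mult_left_mono[OF _ nonneg])
    have "Re (cinner (T u) u) \<le> norm (T u) * norm u"
      using complex_Re_le_cmod norm_cinner_le order_trans by blast
    also have "\<dots> \<le> C * norm u * norm u" using bound[of u] by (simp add: mult_right_mono)
    finally show "Re (cinner (T u) u) \<le> C * (norm u)\<^sup>2" by (simp add: power2_eq_square mult.assoc)
  qed
  finally have "(norm u)\<^sup>2 * (norm u)\<^sup>2 \<le> (C * Re (cinner (T x) x)) * (norm u)\<^sup>2"
    by (simp add: power2_eq_square mult_ac)
  moreover have "0 < (norm u)\<^sup>2" using False u_def by simp
  ultimately show ?thesis unfolding u_def by (rule mult_right_le_imp_le)
qed simp

text \<open>Polarization; this needs complex scalars (a real plane rotation has \<open>\<langle>T x, x\<rangle> = 0\<close>).\<close>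
lemma op_eq_zero_if_cinner_self_zero:
  fixes T :: "'a::complex_inner \<Rightarrow> 'a"
  assumes lin: "clinear_on UNIV T" and zero: "\<And>x. cinner (T x) x = 0"
  shows "T x = 0"
proof -
  have add: "T (a + b) = T a + T b" and scale: "T (c *\<^sub>C a) = c *\<^sub>C T a" for a b c
    using clinear_on_add[OF lin] clinear_on_scaleC[OF lin] by simp_all
  have sum: "cinner (T x) y + cinner (T y) x = 0" for y
    using zero[of "x + y"] zero[of x] zero[of y]
    by (simp add: add cinner_add_left cinner_add_right add.commute)
  have diff: "\<i> * cinner (T x) y - \<i> * cinner (T y) x = 0" for y
    using zero[of "x + \<i> *\<^sub>C y"] zero[of x] zero[of y]
    by (simp add: add scale cinner_add_left cinner_add_right cinner_scaleC_left
        cinner_scaleC_right algebra_simps)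
  have "cinner (T x) y = 0" for y
    using sum[of y] diff[of y] by (simp add: algebra_simps)
  from this[of "T x"] show ?thesis by (simp add: cinner_eq_zero_iff)
qed

section \<open>Suprema of ratios of quadratic forms\<close>

lemma quadratic_form_ratio_Sup:
  fixes p b :: "'a::real_vector \<Rightarrow> real"
  assumes p_scale: "\<And>r x. p (r *\<^sub>R x) = r\<^sup>2 * p x" and b_scale: "\<And>r x. b (r *\<^sub>R x) = r\<^sup>2 * b x"
    and b_nonneg: "\<And>x. 0 \<le> b x" and p_le: "\<And>x. p x \<le> C * b x" and pos: "0 < p x\<^sub>0"
  obtains l where "0 < l" "\<And>x. p x \<le> l * b x" "\<And>\<epsilon>. 0 < \<epsilon> \<Longrightarrow> \<exists>x. b x = 1 \<and> l - \<epsilon> < p x"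
proof -
  define S where "S = p ` {x. b x = 1}"
  have ratio_in_S: "p x / b x \<in> S" if "0 < b x" for x
  proof -
    define r where "r = 1 / sqrt (b x)"
    have "r\<^sup>2 = 1 / b x" using that by (simp add: r_def power_divide)
    then have "b (r *\<^sub>R x) = 1" "p (r *\<^sub>R x) = p x / b x"
      using that by (simp_all add: p_scale b_scale)
    then show ?thesis unfolding S_def by (metis (mono_tags) image_eqI mem_Collect_eq)
  qed
  have bdd: "bdd_above S" unfolding S_def
    by (rule bdd_aboveI[of _ C]) (metis (mono_tags) imageE mem_Collect_eq mult_1_right p_le)
  have "0 < b x\<^sub>0" using p_le[of x\<^sub>0] b_nonneg[of x\<^sub>0] pos by (cases "b x\<^sub>0 = 0") auto
  then have "0 < p x\<^sub>0 / b x\<^sub>0" "p x\<^sub>0 / b x\<^sub>0 \<le> Sup S"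
    using pos ratio_in_S by (auto intro: cSup_upper[OF _ bdd])
  then have "0 < Sup S" by linarith
  moreover have "p x \<le> Sup S * b x" for x
  proof (cases "b x = 0")
    case True then show ?thesis using p_le[of x] by simp
  next
    case False
    then have "0 < b x" using b_nonneg[of x] by simp
    then show ?thesis using cSup_upper[OF ratio_in_S bdd] by (simp add: divide_le_eq)
  qed
  moreover have "\<exists>x. b x = 1 \<and> Sup S - \<epsilon> < p x" if "0 < \<epsilon>" for \<epsilon>
    using that less_cSup_iff[OF _ bdd, of "Sup S - \<epsilon>"] ratio_in_S[OF \<open>0 < b x\<^sub>0\<close>]
    unfolding S_def by auto
  ultimately show ?thesis using that by blast
qed

lemma sup_not_approached_within_quadratic_gap:
  fixes p b n :: "'a \<Rightarrow> real"
  assumes "0 < l" "0 \<le> N"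
    and approx: "\<And>\<epsilon>. 0 < \<epsilon> \<Longrightarrow> \<exists>y. b y = 1 \<and> l - \<epsilon> < p y"
    and p_le: "\<And>y. b y = 1 \<Longrightarrow> p y \<le> M * n y"
    and gap: "\<And>y. b y = 1 \<Longrightarrow> (n y)\<^sup>2 \<le> N * (l - p y)"
  shows False
proof -
  define c where "c = M\<^sup>2 * N"
  define \<epsilon> where "\<epsilon> = min (l / 2) (l\<^sup>2 / (8 * (c + 1)))"
  have "0 \<le> c" using \<open>0 \<le> N\<close> by (simp add: c_def)
  then have "0 < \<epsilon>" using \<open>0 < l\<close> by (simp add: \<epsilon>_def)
  then obtain y where "b y = 1" "l - \<epsilon> < p y" using approx by blast
  have "l / 2 < p y" using \<open>l - \<epsilon> < p y\<close> by (simp add: \<epsilon>_def)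
  have "(p y)\<^sup>2 \<le> M\<^sup>2 * (n y)\<^sup>2"
    using power_mono[OF p_le[OF \<open>b y = 1\<close>], of 2] \<open>l / 2 < p y\<close> \<open>0 < l\<close> by (simp add: power_mult_distrib)
  also have "\<dots> \<le> c * (l - p y)"
    using mult_left_mono[OF gap[OF \<open>b y = 1\<close>], of "M\<^sup>2"] by (simp add: c_def mult.assoc)
  also have "\<dots> \<le> c * \<epsilon>" using \<open>l - \<epsilon> < p y\<close> \<open>0 \<le> c\<close> by (simp add: mult_left_mono)
  also have "\<dots> \<le> c * (l\<^sup>2 / (8 * (c + 1)))"
    using \<open>0 \<le> c\<close> by (intro mult_left_mono) (simp_all add: \<epsilon>_def)
  also have "\<dots> \<le> l\<^sup>2 / 8" using \<open>0 \<le> c\<close> by (simp add: field_simps)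
  also have "\<dots> < (l / 2)\<^sup>2" using \<open>0 < l\<close> by (simp add: power_divide)
  also have "\<dots> \<le> (p y)\<^sup>2" using \<open>l / 2 < p y\<close> \<open>0 < l\<close> by (simp add: power_mono)
  finally show False by simp
qed

section \<open>The sandwich operator \<open>B A\<inverse> B\<close>\<close>

lemma norm_sq_le_form_gap:
  fixes B S :: "'a::complex_inner \<Rightarrow> 'a"
  assumes linB: "clinear_on UNIV B" and hermB: "hermitian_op B" and boundB: "\<And>x. norm (B x) \<le> CB * norm x"
    and linS: "clinear_on UNIV S" and hermS: "hermitian_op S" and boundS: "\<And>x. norm (S x) \<le> CS * norm x"
    and "0 \<le> l" and dominated: "\<And>x. Re (cinner (S x) x) \<le> l * Re (cinner (B x) x)"
  shows "(norm (complex_of_real l *\<^sub>C B x - S x))\<^sup>2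
    \<le> (l * CB + CS) * (l * Re (cinner (B x) x) - Re (cinner (S x) x))"
proof -
  define P where "P y = complex_of_real l *\<^sub>C B y - S y" for y
  have form: "Re (cinner (P y) y) = l * Re (cinner (B y) y) - Re (cinner (S y) y)" for y
    by (simp add: P_def cinner_diff_left cinner_scaleC_left)
  have "(norm (P x))\<^sup>2 \<le> (l * CB + CS) * Re (cinner (P x) x)"
  proof (rule norm_sq_le_nonneg_hermitian)
    show "clinear_on UNIV P"
      unfolding P_def by (intro clinear_on_UNIV_diff clinear_on_UNIV_scaleC linB linS)
    show "hermitian_op P"
      using hermB hermS
      by (simp add: hermitian_op_def P_def cinner_diff_left cinner_diff_right cinner_scaleC_left
          cinner_scaleC_right)
    show "0 \<le> Re (cinner (P y) y)" for y using form dominated by simp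
    show "norm (P y) \<le> (l * CB + CS) * norm y" for y
    proof -
      have "norm (P y) \<le> l * norm (B y) + norm (S y)"
        using norm_triangle_ineq4[of "complex_of_real l *\<^sub>C B y" "S y"] \<open>0 \<le> l\<close>
        by (simp add: P_def norm_scaleC)
      also have "\<dots> \<le> l * (CB * norm y) + CS * norm y"
        using boundB boundS \<open>0 \<le> l\<close> by (intro add_mono mult_left_mono) auto
      finally show ?thesis by (simp add: algebra_simps)
    qed
  qed
  also have "\<dots> = (l * CB + CS) * (l * Re (cinner (B x) x) - Re (cinner (S x) x))"
    by (simp only: form)
  finally show ?thesis unfolding P_def .
qed

lemma Re_cinner_scaled_le: "r * Re (cinner x y) \<le> \<bar>r\<bar> * (norm x * norm (y::'a::complex_inner))"
proof -
  have "r * Re (cinner x y) \<le> \<bar>r\<bar> * \<bar>Re (cinner x y)\<bar>"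
    unfolding abs_mult[symmetric] by (rule abs_ge_self)
  also have "\<dots> \<le> \<bar>r\<bar> * cmod (cinner x y)" by (intro mult_left_mono abs_Re_le_cmod) simp
  also have "\<dots> \<le> \<bar>r\<bar> * (norm x * norm y)" by (intro mult_left_mono norm_cinner_le) simp
  finally show ?thesis .
qed

lemma norm_sandwich_le_form:
  fixes K B :: "'a::complex_inner \<Rightarrow> 'a"
  assumes boundK: "\<And>u. norm (K u) \<le> CK * norm u" and "0 \<le> CK"
    and linB: "clinear_on UNIV B" and hermB: "hermitian_op B" and nonnegB: "\<And>x. 0 \<le> Re (cinner (B x) x)"
    and boundB: "\<And>x. norm (B x) \<le> CB * norm x"
  shows "norm (K (B y)) * norm (B y) \<le> CK * CB * Re (cinner (B y) y)"
proof -
  have "norm (K (B y)) * norm (B y) \<le> CK * norm (B y) * norm (B y)"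
    by (rule mult_right_mono[OF boundK norm_ge_zero])
  also have "\<dots> \<le> CK * (CB * Re (cinner (B y) y))"
    using mult_left_mono[OF norm_sq_le_nonneg_hermitian[OF linB hermB nonnegB boundB] \<open>0 \<le> CK\<close>]
    by (simp add: power2_eq_square mult.assoc)
  finally show ?thesis by (simp add: mult.assoc)
qed

lemma norm_sq_sandwich_gap:
  fixes K B :: "'a::complex_inner \<Rightarrow> 'a" and \<sigma> l :: real
  assumes linK: "clinear_on UNIV K" and hermK: "hermitian_op K"
    and boundK: "\<And>u. norm (K u) \<le> CK * norm u" and "0 \<le> CK"
    and linB: "clinear_on UNIV B" and hermB: "hermitian_op B"
    and boundB: "\<And>x. norm (B x) \<le> CB * norm x" and "0 \<le> CB"
    and "0 \<le> l" and dominated: "\<And>y. \<sigma> * Re (cinner (K (B y)) (B y)) \<le> l * Re (cinner (B y) y)"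
  shows "(norm (complex_of_real l *\<^sub>C B x - complex_of_real \<sigma> *\<^sub>C B (K (B x))))\<^sup>2
    \<le> (l * CB + \<bar>\<sigma>\<bar> * (CB * (CK * CB))) * (l * Re (cinner (B x) x) - \<sigma> * Re (cinner (K (B x)) (B x)))"
proof -
  define S where "S y = complex_of_real \<sigma> *\<^sub>C B (K (B y))" for y
  have form_S: "Re (cinner (S y) y) = \<sigma> * Re (cinner (K (B y)) (B y))" for y
    by (simp add: S_def cinner_scaleC_left hermitian_opD[OF hermB])
  have "(norm (complex_of_real l *\<^sub>C B x - S x))\<^sup>2
    \<le> (l * CB + \<bar>\<sigma>\<bar> * (CB * (CK * CB))) * (l * Re (cinner (B x) x) - Re (cinner (S x) x))"
  proof (rule norm_sq_le_form_gap[OF linB hermB boundB _ _ _ \<open>0 \<le> l\<close>])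
    show "clinear_on UNIV S"
      unfolding S_def
      by (rule clinear_on_UNIV_scaleC[OF clinear_on_UNIV_comp[OF linB clinear_on_UNIV_comp[OF linK linB]]])
    show "hermitian_op S"
      using hermitian_op_sandwich[OF hermB hermK]
      by (simp add: hermitian_op_def S_def cinner_scaleC_left cinner_scaleC_right)
    show "norm (S z) \<le> \<bar>\<sigma>\<bar> * (CB * (CK * CB)) * norm z" for z
    proof -
      have "norm (B (K (B z))) \<le> CB * norm (K (B z))" by (rule boundB)
      also have "\<dots> \<le> CB * (CK * norm (B z))" by (rule mult_left_mono[OF boundK \<open>0 \<le> CB\<close>])
      also have "\<dots> \<le> CB * (CK * (CB * norm z))"
        using boundB \<open>0 \<le> CB\<close> \<open>0 \<le> CK\<close> by (intro mult_left_mono) auto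
      finally have "\<bar>\<sigma>\<bar> * norm (B (K (B z))) \<le> \<bar>\<sigma>\<bar> * (CB * (CK * (CB * norm z)))"
        by (simp add: mult_left_mono)
      then show ?thesis by (simp add: S_def norm_scaleC mult.assoc)
    qed
    show "Re (cinner (S z) z) \<le> l * Re (cinner (B z) z)" for z using dominated form_S by simp
  qed
  then show ?thesis by (simp only: form_S) (simp only: S_def)
qed

lemma sandwich_form_le_perturbed_norm:
  fixes K B :: "'a::complex_inner \<Rightarrow> 'a" and \<sigma> l :: real
  assumes "0 < l" and "0 \<le> Ct" and "norm (B y) \<le> \<beta>"
    and bounded_below: "norm (K (B y)) \<le> Ct * norm (B y + complex_of_real (- \<sigma> / l) *\<^sub>C B (K (B y)))"
  shows "\<sigma> * Re (cinner (K (B y)) (B y))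
    \<le> \<bar>\<sigma>\<bar> * Ct * \<beta> / l * norm (complex_of_real l *\<^sub>C B y - complex_of_real \<sigma> *\<^sub>C B (K (B y)))"
proof -
  let ?P = "complex_of_real l *\<^sub>C B y - complex_of_real \<sigma> *\<^sub>C B (K (B y))"
  have "B y + complex_of_real (- \<sigma> / l) *\<^sub>C B (K (B y)) = complex_of_real (1 / l) *\<^sub>C ?P"
    using \<open>0 < l\<close> by (simp add: scaleC_diff_right scaleC_scaleC scaleC_one scaleC_minus_left)
  then have "norm (K (B y)) \<le> Ct / l * norm ?P"
    using bounded_below \<open>0 < l\<close> by (simp add: norm_scaleC norm_divide)
  then have "\<bar>\<sigma>\<bar> * (norm (K (B y)) * norm (B y)) \<le> \<bar>\<sigma>\<bar> * (Ct / l * norm ?P * \<beta>)"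
    using \<open>norm (B y) \<le> \<beta>\<close> \<open>0 \<le> Ct\<close> \<open>0 < l\<close> by (intro mult_left_mono mult_mono) simp_all
  with Re_cinner_scaled_le[of \<sigma> "K (B y)" "B y"] show ?thesis by (simp add: mult_ac)
qed

lemma sandwich_form_sign:
  fixes K B :: "'a::complex_inner \<Rightarrow> 'a" and \<sigma> :: real
  assumes linK: "clinear_on UNIV K" and hermK: "hermitian_op K"
    and boundK: "\<And>u. norm (K u) \<le> CK * norm u" and "0 \<le> CK"
    and linB: "clinear_on UNIV B" and hermB: "hermitian_op B" and nonnegB: "\<And>x. 0 \<le> Re (cinner (B x) x)"
    and boundB: "\<And>x. norm (B x) \<le> CB * norm x" and "0 \<le> CB"
    and stable: "\<And>t::real. \<exists>C. \<forall>u. norm (K u) \<le> C * norm (u + complex_of_real t *\<^sub>C B (K u))"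
  shows "\<sigma> * Re (cinner (K (B x)) (B x)) \<le> 0"
proof (rule ccontr)
  define p where "p y = \<sigma> * Re (cinner (K (B y)) (B y))" for y
  define b where "b y = Re (cinner (B y) y)" for y
  assume "\<not> ?thesis"
  then have "0 < p x" by (simp add: p_def)
  have "p y \<le> (\<bar>\<sigma>\<bar> * (CK * CB)) * b y" for y
    using Re_cinner_scaled_le[of \<sigma> "K (B y)" "B y"]
      mult_left_mono[OF norm_sandwich_le_form[OF boundK \<open>0 \<le> CK\<close> linB hermB nonnegB boundB], of "\<bar>\<sigma>\<bar>" y]
    by (simp add: p_def b_def mult.assoc)
  moreover have "p (r *\<^sub>R y) = r\<^sup>2 * p y" "b (r *\<^sub>R y) = r\<^sup>2 * b y" for r y
    by (simp_all add: p_def b_def clinear_on_UNIV_scaleR[OF linB] clinear_on_UNIV_scaleR[OF linK]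
        cinner_scaleR_left cinner_scaleR_right power2_eq_square)
  moreover have "0 \<le> b y" for y by (simp add: b_def nonnegB)
  ultimately obtain l where "0 < l" and dominated: "\<And>y. p y \<le> l * b y"
    and approx: "\<And>\<epsilon>. 0 < \<epsilon> \<Longrightarrow> \<exists>y. b y = 1 \<and> l - \<epsilon> < p y"
    using quadratic_form_ratio_Sup[of p b _ x] \<open>0 < p x\<close> by metis
  define P where "P y = complex_of_real l *\<^sub>C B y - complex_of_real \<sigma> *\<^sub>C B (K (B y))" for y
  define CP where "CP = l * CB + \<bar>\<sigma>\<bar> * (CB * (CK * CB))"
  have gap: "(norm (P y))\<^sup>2 \<le> CP * (l * b y - p y)" for y
    unfolding P_def CP_def p_def b_def
    by (rule norm_sq_sandwich_gap[OF linK hermK boundK \<open>0 \<le> CK\<close> linB hermB boundB \<open>0 \<le> CB\<close>])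
      (use \<open>0 < l\<close> dominated in \<open>simp_all add: p_def b_def\<close>)
  \<comment> \<open>\<open>t = - \<sigma> / l\<close> is chosen so that \<open>l (u + t B K u) = P y\<close> for \<open>u = B y\<close>\<close>
  obtain C0 where "\<And>u. norm (K u) \<le> C0 * norm (u + complex_of_real (- \<sigma> / l) *\<^sub>C B (K u))"
    using stable by blast
  then obtain Ct where "0 \<le> Ct" and
    bounded_below: "\<And>u. norm (K u) \<le> Ct * norm (u + complex_of_real (- \<sigma> / l) *\<^sub>C B (K u))"
    by (rule nonneg_bound[of K]) blast
  have p_le_M: "p y \<le> \<bar>\<sigma>\<bar> * Ct * sqrt CB / l * norm (P y)" if "b y = 1" for y
  proof -
    have "norm (B y) \<le> sqrt CB"
      using norm_sq_le_nonneg_hermitian[OF linB hermB nonnegB boundB, of y] that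
      by (simp add: b_def real_le_rsqrt)
    from sandwich_form_le_perturbed_norm[where K = K and B = B and y = y,
        OF \<open>0 < l\<close> \<open>0 \<le> Ct\<close> this bounded_below[of "B y"]]
    show ?thesis by (simp add: p_def P_def)
  qed
  show False
  proof (rule sup_not_approached_within_quadratic_gap[OF \<open>0 < l\<close> _ approx p_le_M])
    show "0 \<le> CP" using \<open>0 < l\<close> \<open>0 \<le> CB\<close> \<open>0 \<le> CK\<close> by (simp add: CP_def)
    show "(norm (P y))\<^sup>2 \<le> CP * (l - p y)" if "b y = 1" for y using gap[of y] that by simp
  qed
qed

lemma sandwich_eq_zero:
  fixes K B :: "'a::complex_inner \<Rightarrow> 'a"
  assumes linK: "clinear_on UNIV K" and hermK: "hermitian_op K"
    and boundK: "\<And>u. norm (K u) \<le> CK * norm u" and "0 \<le> CK"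
    and linB: "clinear_on UNIV B" and hermB: "hermitian_op B" and nonnegB: "\<And>x. 0 \<le> Re (cinner (B x) x)"
    and boundB: "\<And>x. norm (B x) \<le> CB * norm x" and "0 \<le> CB"
    and stable: "\<And>t::real. \<exists>C. \<forall>u. norm (K u) \<le> C * norm (u + complex_of_real t *\<^sub>C B (K u))"
  shows "B (K (B x)) = 0"
proof (rule op_eq_zero_if_cinner_self_zero[where T = "\<lambda>x. B (K (B x))"])
  show "clinear_on UNIV (\<lambda>x. B (K (B x)))"
    by (rule clinear_on_UNIV_comp[OF linB clinear_on_UNIV_comp[OF linK linB]])
  fix y
  have "cinner (B (K (B y))) y = cinner (K (B y)) (B y)" by (simp add: hermitian_opD[OF hermB])
  moreover have "Re (cinner (K (B y)) (B y)) = 0"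
    using sandwich_form_sign[OF assms, of 1 y] sandwich_form_sign[OF assms, of "-1" y] by simp
  moreover have "cnj (cinner (K (B y)) (B y)) = cinner (K (B y)) (B y)"
    by (metis cinner_commute hermK hermitian_opD)
  then have "Im (cinner (K (B y)) (B y)) = 0" by (simp add: complex_eq_iff)
  ultimately show "cinner (B (K (B y))) y = 0" by (simp add: complex_eq_iff)
qed

lemma inv_into_bounded_below_if_resolvent:
  assumes bijA: "bij_betw A D UNIV" and res: "0 \<in> resolvent_set D (\<lambda>x. A x + c *\<^sub>C B x)"
  shows "\<exists>C. \<forall>u. norm (inv_into D A u) \<le> C * norm (u + c *\<^sub>C B (inv_into D A u))"
proof -
  let ?F = "\<lambda>x. A x + c *\<^sub>C B x"
  obtain C where bijF: "bij_betw ?F D UNIV" and boundC: "\<And>y. norm (inv_into D ?F y) \<le> C * norm y"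
    using res unfolding zero_in_resolvent_set_iff by blast
  have "norm (inv_into D A u) \<le> C * norm (u + c *\<^sub>C B (inv_into D A u))" for u
  proof -
    let ?y = "inv_into D A u"
    have "?F ?y = u + c *\<^sub>C B ?y" using bij_betw_UNIV_inv_into(2)[OF bijA] by simp
    moreover have "inv_into D ?F (?F ?y) = ?y"
      by (rule bij_betw_inv_into_left[OF bijF bij_betw_UNIV_inv_into(1)[OF bijA]])
    ultimately show ?thesis using boundC by metis
  qed
  then show ?thesis by blast
qed

lemma perturbation_inverse:
  fixes A B :: "'a::complex_vector \<Rightarrow> 'a"
  assumes linA: "clinear_on D A" and bijA: "bij_betw A D UNIV" and linB: "clinear_on UNIV B"
    and sandwich_zero: "\<And>x. B (inv_into D A (B x)) = 0"
  shows "bij_betw (\<lambda>x. A x + z *\<^sub>C B x) D UNIV"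
    and "inv_into D (\<lambda>x. A x + z *\<^sub>C B x) y = inv_into D A y - z *\<^sub>C inv_into D A (B (inv_into D A y))"
proof -
  define K where "K = inv_into D A"
  define F where "F = (\<lambda>x. A x + z *\<^sub>C B x)"
  define R where "R y = K y - z *\<^sub>C K (B (K y))" for y
  have KD: "K y \<in> D" and AK: "A (K y) = y" for y
    using bij_betw_UNIV_inv_into[OF bijA] by (simp_all add: K_def)
  have KA: "K (A x) = x" if "x \<in> D" for x
    using bij_betw_inv_into_left[OF bijA that] by (simp add: K_def)
  have linK: "clinear_on UNIV K" unfolding K_def by (rule clinear_on_inv_into[OF linA bijA])
  have BKB: "B (K (B x)) = 0" for x using sandwich_zero by (simp add: K_def)
  have RD: "R y \<in> D" for y
    unfolding R_def using clinear_on_diff(1)[OF linA KD clinear_on_scaleC(1)[OF linA KD]] .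
  have FR: "F (R y) = y" for y
  proof -
    have "A (R y) = y - z *\<^sub>C B (K y)"
      unfolding R_def
      using clinear_on_diff(2)[OF linA KD clinear_on_scaleC(1)[OF linA KD]]
        clinear_on_scaleC(2)[OF linA KD] AK
      by simp
    moreover have "B (R y) = B (K y)"
      unfolding R_def by (simp add: clinear_on_diff[OF linB] clinear_on_scaleC[OF linB] BKB)
    ultimately show ?thesis unfolding F_def by simp
  qed
  have RF: "R (F x) = x" if "x \<in> D" for x
  proof -
    have KF: "K (F x) = x + z *\<^sub>C K (B x)"
      unfolding F_def by (simp add: clinear_on_add[OF linK] clinear_on_scaleC[OF linK] KA[OF that])
    have "B (K (F x)) = B x"
      unfolding KF by (simp add: clinear_on_add[OF linB] clinear_on_scaleC[OF linB] BKB)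
    then show ?thesis unfolding R_def KF by simp
  qed
  have bijF: "bij_betw F D UNIV" by (rule bij_betw_byWitness[of D R]) (use RF FR RD in auto)
  then show "bij_betw (\<lambda>x. A x + z *\<^sub>C B x) D UNIV" unfolding F_def .
  have "inv_into D F y = R y" using bij_betw_inv_into_left[OF bijF RD[of y]] by (simp add: FR)
  then show "inv_into D (\<lambda>x. A x + z *\<^sub>C B x) y = inv_into D A y - z *\<^sub>C inv_into D A (B (inv_into D A y))"
    unfolding F_def R_def K_def .
qed

lemma resolvent_perturbation_formula:
  fixes A B :: "'a::chilbert_space \<Rightarrow> 'a"
  assumes linA: "clinear_on D A" and "0 \<in> resolvent_set D A" and "bounded_cop B"
    and sandwich_zero: "\<And>x. B (inv_into D A (B x)) = 0"
  shows "0 \<in> resolvent_set D (\<lambda>x. A x + z *\<^sub>C B x) \<and>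
    (\<forall>y. inv_into D (\<lambda>x. A x + z *\<^sub>C B x) y = inv_into D A y - z *\<^sub>C inv_into D A (B (inv_into D A y)))"
proof -
  obtain CK where bijA: "bij_betw A D UNIV" and "0 \<le> CK"
    and boundK: "\<And>y. norm (inv_into D A y) \<le> CK * norm y"
    using zero_in_resolvent_setE[OF \<open>0 \<in> resolvent_set D A\<close>] by blast
  obtain CB where linB: "clinear_on UNIV B" and "0 \<le> CB" and boundB: "\<And>x. norm (B x) \<le> CB * norm x"
    using bounded_copE[OF \<open>bounded_cop B\<close>] by blast
  define K where "K = inv_into D A"
  have "norm (K y - z *\<^sub>C K (B (K y))) \<le> (CK + cmod z * (CK * (CB * CK))) * norm y" for y
  proof -
    have "norm (K (B (K y))) \<le> CK * norm (B (K y))" using boundK unfolding K_def .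
    also have "\<dots> \<le> CK * (CB * norm (K y))" using boundB \<open>0 \<le> CK\<close> by (simp add: mult_left_mono)
    also have "\<dots> \<le> CK * (CB * (CK * norm y))"
      using boundK[of y] \<open>0 \<le> CK\<close> \<open>0 \<le> CB\<close> unfolding K_def by (simp add: mult_left_mono)
    finally have "cmod z * norm (K (B (K y))) \<le> cmod z * (CK * (CB * (CK * norm y)))"
      by (simp add: mult_left_mono)
    moreover have "norm (K y - z *\<^sub>C K (B (K y))) \<le> norm (K y) + cmod z * norm (K (B (K y)))"
      using norm_triangle_ineq4[of "K y" "z *\<^sub>C K (B (K y))"] by (simp only: norm_scaleC)
    moreover have "norm (K y) \<le> CK * norm y" using boundK unfolding K_def .
    ultimately show ?thesis by (simp add: algebra_simps)
  qed
  then show ?thesis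
    using perturbation_inverse[OF linA bijA linB sandwich_zero]
    unfolding zero_in_resolvent_set_iff K_def by auto
qed

lemma sandwich_zero_if_real_resolvent:
  fixes A B :: "'a::chilbert_space \<Rightarrow> 'a"
  assumes "self_adjoint_op D A" and "self_adjoint_op UNIV B" and "bounded_cop B" and "nonneg_op B"
    and real_resolvent: "\<And>t::real. 0 \<in> resolvent_set D (\<lambda>x. A x + complex_of_real t *\<^sub>C B x)"
  shows "B (inv_into D A (B x)) = 0"
proof -
  have linA: "clinear_on D A" and symA: "\<forall>x\<in>D. \<forall>y\<in>D. cinner (A x) y = cinner x (A y)"
    using assms(1) unfolding self_adjoint_op_def by blast+
  have hermB: "hermitian_op B"
    using assms(2) unfolding self_adjoint_op_def hermitian_op_def by blast
  have nonnegB: "\<And>x. 0 \<le> Re (cinner (B x) x)" using assms(4) unfolding nonneg_op_def by blast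
  obtain CB where linB: "clinear_on UNIV B" and "0 \<le> CB" and boundB: "\<And>x. norm (B x) \<le> CB * norm x"
    using bounded_copE[OF assms(3)] by blast
  obtain CK where bijA: "bij_betw A D UNIV" and "0 \<le> CK"
    and boundK: "\<And>y. norm (inv_into D A y) \<le> CK * norm y"
    using zero_in_resolvent_setE[of D A] real_resolvent[of 0] by auto
  show ?thesis
    by (rule sandwich_eq_zero[OF clinear_on_inv_into[OF linA bijA] hermitian_op_inv_into[OF symA bijA]
          boundK \<open>0 \<le> CK\<close> linB hermB nonnegB boundB \<open>0 \<le> CB\<close>
          inv_into_bounded_below_if_resolvent[OF bijA real_resolvent]])
qed

theorem proposition2p1:
  fixes D :: "'a::chilbert_space set" and A B :: "'a \<Rightarrow> 'a"
  assumes "self_adjoint_op D A"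
    and "self_adjoint_op UNIV B" and "bounded_cop B" and "nonneg_op B"
  shows "((\<forall>t::real. 0 \<in> resolvent_set D (\<lambda>x. A x + complex_of_real t *\<^sub>C B x)) \<longleftrightarrow>
          (0 \<in> resolvent_set D A \<and> (\<forall>x. B (inv_into D A (B x)) = 0)))
     \<and> ((\<forall>t::real. 0 \<in> resolvent_set D (\<lambda>x. A x + complex_of_real t *\<^sub>C B x)) \<longrightarrow>
          (\<forall>z::complex. 0 \<in> resolvent_set D (\<lambda>x. A x + z *\<^sub>C B x) \<and>
             (\<forall>y. inv_into D (\<lambda>x. A x + z *\<^sub>C B x) y
                  = inv_into D A y - z *\<^sub>C inv_into D A (B (inv_into D A y)))))"
proof -
  have linA: "clinear_on D A" using assms(1) unfolding self_adjoint_op_def by blast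
  have necessary: "0 \<in> resolvent_set D A \<and> (\<forall>x. B (inv_into D A (B x)) = 0)"
    if "\<forall>t::real. 0 \<in> resolvent_set D (\<lambda>x. A x + complex_of_real t *\<^sub>C B x)"
    using that[rule_format, of 0] sandwich_zero_if_real_resolvent[OF assms that[rule_format]] by simp
  have sufficient: "0 \<in> resolvent_set D (\<lambda>x. A x + z *\<^sub>C B x) \<and>
      (\<forall>y. inv_into D (\<lambda>x. A x + z *\<^sub>C B x) y = inv_into D A y - z *\<^sub>C inv_into D A (B (inv_into D A y)))"
    if "0 \<in> resolvent_set D A" and "\<forall>x. B (inv_into D A (B x)) = 0" for z
    using resolvent_perturbation_formula[OF linA that(1) assms(3)] that(2) by blast
  show ?thesis using necessary sufficient by blast
qed

end
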